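(* Let $\mathbf{k}$ be an algebraically closed field of characteristic $0$, $G=\mathrm{GL}_2$, $(\rho,L)$ the $3$-dimensional irreducible rational representation $L=L(2\epsilon_1)$, $\underline{G}=G\ltimes_\rho L$, and $\underline{\mathcal{N}}=\mathcal{N}\times L$ where $\mathcal{N}$ is the nilpotent cone of $\mathfrak{gl}_2$. Let $J_2=\begin{pmatrix}0&1\\0&0\end{pmatrix}$, let $v_0\in L$ be a nonzero lowest weight vector and $v_i=\mathsf{d}\rho(J_2)^iv_0$ for $i=1,2$. Then $\underline{\mathcal{N}}$ is the disjoint union of exactly five $\underline{G}$-orbits, namely the orbits $\mathcal{O}_1,\dots,\mathcal{O}_5$ of $(0,0)$, $(0,v_0)$, $(0,v_0+v_2)$, $(J_2,0)$, $(J_2,v_0)$ respectively.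
   Context: $L(2\epsilon_1)$ can be realized as the quadratic forms in $x,y$ with $\mathrm{GL}_2$ acting by linear substitution. $\underline{G}$ is $G\times L$ with product $(g_1,v_1)(g_2,v_2)=(g_1g_2,\rho(g_1)v_2+v_1)$ and adjoint action $\mathrm{Ad}(g,v)(X,w)=(\mathrm{Ad}(g)X,-\mathsf{d}\rho(\mathrm{Ad}(g)X)v+\rho(g)w)$ on $\mathfrak{gl}_2\times L$. $\{v_0,v_1,v_2\}$ is a basis of $L$. *)

theory Defs
  imports "HOL-Analysis.Analysis" "HOL-Computational_Algebra.Polynomial"
begin

(* L = L(2 eps_1) realised as quadratic forms  a x^2 + b xy + c y^2  in x,y,
   stored as the coordinate vector (a,b,c) :: 'k^3 w.r.t. the basis x^2, xy, y^2.
   GL_2 acts by linear substitution (x,y) |-> (x,y) g, i.e.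
   x |-> g11 x + g21 y,  y |-> g12 x + g22 y  (this is Sym^2 of the standard rep). *)

definition rho :: "'k::field^2^2 \<Rightarrow> 'k^3 \<Rightarrow> 'k^3" where
  "rho g v = (let a = v$1; b = v$2; c = v$3;
                  g11 = g$1$1; g12 = g$1$2; g21 = g$2$1; g22 = g$2$2 in
     vector [a*g11^2 + b*g11*g12 + c*g12^2,
             2*a*g11*g21 + b*(g11*g22 + g21*g12) + 2*c*g12*g22,
             a*g21^2 + b*g21*g22 + c*g22^2])"

definition drho :: "'k::field^2^2 \<Rightarrow> 'k^3 \<Rightarrow> 'k^3" where
  "drho X v = (let a = v$1; b = v$2; c = v$3;
                  x11 = X$1$1; x12 = X$1$2; x21 = X$2$1; x22 = X$2$2 in
     vector [2*a*x11 + b*x12,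
             2*a*x21 + b*(x11 + x22) + 2*c*x12,
             b*x21 + 2*c*x22])"

definition J2 :: "'k::field^2^2" where
  "J2 = (\<chi> i j. if i = 1 \<and> j = 2 then 1 else 0)"

definition E21 :: "'k::field^2^2" where
  "E21 = (\<chi> i j. if i = 2 \<and> j = 1 then 1 else 0)"

definition diag2 :: "'k::field \<Rightarrow> 'k \<Rightarrow> 'k^2^2" where
  "diag2 t1 t2 = (\<chi> i j. if i = j then (if i = 1 then t1 else t2) else 0)"

(* nonzero lowest weight vector (Borel = upper triangular matrices, containing J2):
   a nonzero weight vector for the diagonal torus killed by the lowering operator E21 *)
definition lowest_weight_vector :: "'k::field^3 \<Rightarrow> bool" where
  "lowest_weight_vector v \<longleftrightarrow> v \<noteq> 0 \<and>
     (\<forall>t1 t2. t1 \<noteq> 0 \<and> t2 \<noteq> 0 \<longrightarrow> (\<exists>c. rho (diag2 t1 t2) v = c *s v)) \<and>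
     drho E21 v = 0"

definition nilcone :: "('k::field^2^2) set" where
  "nilcone = {X. \<exists>n. ((\<lambda>M. X ** M) ^^ n) (mat 1) = 0}"

(* adjoint action of the semidirect product G \<ltimes>_rho L (G = GL_2) on gl_2 \<times> L:
   Ad(g,v)(X,w) = (Ad(g)X, - d rho(Ad(g)X) v + rho(g) w) *)
definition Ad_semi :: "(('k::field^2^2) \<times> ('k^3)) \<Rightarrow> (('k^2^2) \<times> ('k^3)) \<Rightarrow> (('k^2^2) \<times> ('k^3))" where
  "Ad_semi gv Xw = (let g = fst gv; v = snd gv; X = fst Xw; w = snd Xw;
                        Y = g ** X ** matrix_inv g in
                    (Y, - drho Y v + rho g w))"

definition semi_orbit :: "(('k::field^2^2) \<times> ('k^3)) \<Rightarrow> (('k^2^2) \<times> ('k^3)) set" where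
  "semi_orbit p = {Ad_semi (g, v) p | g v. invertible g}"

end

theory Submission
  imports Defs
begin

text \<open>A nonzero nilpotent \<open>X\<close> is conjugate to \<open>J2\<close>. Over \<open>X = 0\<close> only \<open>rho\<close> acts, and
  \<open>GL\<^sub>2\<close> has three orbits on binary quadratic forms (zero, nonzero squares, nondegenerate
  forms), told apart by the discriminant, which \<open>rho g\<close> multiplies by \<open>(det g)\<^sup>2\<close>. Over
  \<open>X = J2\<close> the group translates \<open>w\<close> by the image of \<open>drho J2\<close>, the forms without
  \<open>y\<^sup>2\<close>-term, and the scalars \<open>s\<close> centralising \<open>J2\<close> multiply the \<open>y\<^sup>2\<close>-coefficient
  by \<open>s\<^sup>2\<close>; so only whether \<open>w\<close> lies in that image remains. Conversely, whether \<open>X = 0\<close>,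
  whether \<open>w\<close> lies in the image of \<open>drho X\<close>, and whether \<open>X = 0\<close> with \<open>w\<close> degenerate
  are orbit invariants, and they separate the five representatives.\<close>

lemmas entrywise = matrix_matrix_mult_def mat_def sum_2 det_2 vec_eq_iff forall_2 forall_3

lemma matrix_mul_inv:
  assumes "invertible (A :: 'a::field^'n^'n)"
  shows "A ** matrix_inv A = mat 1" and "matrix_inv A ** A = mat 1"
  using someI_ex[OF assms[unfolded invertible_def]] unfolding matrix_inv_def by auto

lemma matrix_inv_unique:
  fixes A B :: "'a::field^'n^'n"
  assumes "A ** B = mat 1"
  shows "matrix_inv A = B"
proof -
  have "invertible A"
    using assms invertible_right_inverse by blast
  then have "matrix_inv A = matrix_inv A ** (A ** B)"
    using assms by simp
  also have "\<dots> = B"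
    using matrix_mul_inv(2)[OF \<open>invertible A\<close>] by (simp add: matrix_mul_assoc)
  finally show ?thesis .
qed

lemma invertible_matrix_inv: "invertible (A :: 'a::field^'n^'n) \<Longrightarrow> invertible (matrix_inv A)"
  using matrix_mul_inv invertible_def by blast

lemma matrix_inv_mult:
  fixes A B :: "'a::field^'n^'n"
  assumes "invertible A" and "invertible B"
  shows "matrix_inv (A ** B) = matrix_inv B ** matrix_inv A"
proof (rule matrix_inv_unique)
  have "A ** B ** (matrix_inv B ** matrix_inv A) = A ** (B ** matrix_inv B) ** matrix_inv A"
    by (simp add: matrix_mul_assoc)
  then show "A ** B ** (matrix_inv B ** matrix_inv A) = mat 1"
    using assms by (simp add: matrix_mul_inv)
qed

lemma matrix_inv_mat: "s \<noteq> 0 \<Longrightarrow> matrix_inv (mat s :: 'a::field^2^2) = mat (inverse s)"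
  by (rule matrix_inv_unique) (simp add: entrywise)

lemma rho_mult: "rho g (rho h w) = rho (g ** h) (w :: 'k::field^3)"
  by (simp add: rho_def Let_def entrywise algebra_simps power2_eq_square)

lemma rho_one: "rho (mat 1) w = (w :: 'k::field^3)"
  by (simp add: rho_def Let_def entrywise)

lemma rho_mat: "rho (mat s) w = s\<^sup>2 *s (w :: 'k::field^3)"
  by (simp add: rho_def Let_def entrywise algebra_simps power2_eq_square)

lemma rho_add: "rho g (w + w') = rho g w + rho g (w' :: 'k::field^3)"
  by (simp add: rho_def Let_def entrywise algebra_simps)

lemma rho_diff: "rho g (w - w') = rho g w - rho g (w' :: 'k::field^3)"
  by (simp add: rho_def Let_def entrywise algebra_simps)

lemma drho_add: "drho X (w + w') = drho X w + drho X (w' :: 'k::field^3)"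
  by (simp add: drho_def Let_def entrywise algebra_simps)

lemma drho_diff: "drho X (w - w') = drho X w - drho X (w' :: 'k::field^3)"
  by (simp add: drho_def Let_def entrywise algebra_simps)

lemma drho_0_left [simp]: "drho 0 w = (0 :: 'k::field^3)"
  by (simp add: drho_def Let_def entrywise)

lemma drho_0_right [simp]: "drho X 0 = (0 :: 'k::field^3)"
  by (simp add: drho_def Let_def entrywise)

text \<open>Both sides are the derivative of the quadratic map \<open>g \<mapsto> rho g v\<close> at \<open>g\<close> in the
  direction \<open>Z ** g = g ** Y\<close>; no invertibility is needed.\<close>
lemma rho_drho_intertwine:
  assumes "Z ** g = g ** Y"
  shows "rho g (drho Y v) = drho Z (rho g (v :: 'k::field^3))"
  using assms
  by (simp add: rho_def drho_def Let_def entrywise) algebra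

definition discr :: "'k::comm_ring_1^3 \<Rightarrow> 'k" where
  "discr w = (w$2)\<^sup>2 - 4 * w$1 * w$3"

lemma discr_rho: "discr (rho g w) = (det g)\<^sup>2 * discr (w :: 'k::field^3)"
  by (simp add: discr_def rho_def Let_def det_2) algebra

subsection \<open>The adjoint action and its orbits\<close>

lemma Ad_semi_apply:
  "Ad_semi (g, v) (X, w) = (g ** X ** matrix_inv g, - drho (g ** X ** matrix_inv g) v + rho g w)"
  by (simp add: Ad_semi_def Let_def)

lemma Ad_semi_zero: "Ad_semi (g, v) (0, w) = (0, rho g (w :: 'k::field^3))"
  by (simp add: Ad_semi_apply)

lemma Ad_semi_one: "Ad_semi (mat 1, 0) p = (p :: ('k::field^2^2) \<times> ('k^3))"
  by (cases p) (simp add: Ad_semi_apply matrix_inv_unique rho_one)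

lemma Ad_semi_compose:
  assumes "invertible h" and "invertible g"
  shows "Ad_semi (h, u) (Ad_semi (g, v) p)
    = Ad_semi (h ** g, rho h v + u) (p :: ('k::field^2^2) \<times> ('k^3))"
proof -
  obtain X w where p: "p = (X, w)"
    by (cases p)
  define Y where "Y = g ** X ** matrix_inv g"
  have conj: "h ** Y ** matrix_inv h = h ** g ** X ** matrix_inv (h ** g)"
    using assms by (simp add: Y_def matrix_inv_mult matrix_mul_assoc)
  have "(h ** Y ** matrix_inv h) ** h = h ** Y"
    using assms by (simp add: matrix_mul_inv matrix_mul_assoc[symmetric])
  then have "rho h (drho Y v) = drho (h ** Y ** matrix_inv h) (rho h v)"
    by (rule rho_drho_intertwine)
  then show ?thesis
    by (simp add: p Ad_semi_apply conj rho_add rho_diff rho_mult drho_add flip: Y_def)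
qed

lemma semi_orbitI: "invertible g \<Longrightarrow> Ad_semi (g, v) p \<in> semi_orbit p"
  unfolding semi_orbit_def by blast

lemma semi_orbitE:
  assumes "q \<in> semi_orbit p"
  obtains g v where "invertible g" and "q = Ad_semi (g, v) p"
  using assms unfolding semi_orbit_def by blast

lemma semi_orbit_refl: "p \<in> semi_orbit (p :: ('k::field^2^2) \<times> ('k^3))"
  using semi_orbitI[of "mat 1" 0 p] by (simp add: Ad_semi_one invertible_det_nz)

lemma semi_orbit_trans:
  assumes "q \<in> semi_orbit p" and "r \<in> semi_orbit q"
  shows "r \<in> semi_orbit (p :: ('k::field^2^2) \<times> ('k^3))"
proof -
  obtain g v where g: "invertible g" and q: "q = Ad_semi (g, v) p"
    using assms(1) by (rule semi_orbitE)
  obtain h u where h: "invertible h" and r: "r = Ad_semi (h, u) q"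
    using assms(2) by (rule semi_orbitE)
  show ?thesis
    using semi_orbitI[OF invertible_mult[OF h g]] by (simp add: q r Ad_semi_compose[OF h g])
qed

lemma semi_orbit_sym:
  assumes "q \<in> semi_orbit p"
  shows "p \<in> semi_orbit (q :: ('k::field^2^2) \<times> ('k^3))"
proof -
  obtain g v where g: "invertible g" and q: "q = Ad_semi (g, v) p"
    using assms by (rule semi_orbitE)
  have g': "invertible (matrix_inv g)"
    using g by (rule invertible_matrix_inv)
  have "Ad_semi (matrix_inv g, - rho (matrix_inv g) v) q = p"
    using g by (simp add: q Ad_semi_compose[OF g' g] matrix_mul_inv Ad_semi_one)
  then show ?thesis
    using semi_orbitI[OF g'] by metis
qed

lemma semi_orbit_eq:
  "q \<in> semi_orbit p \<Longrightarrow> semi_orbit q = semi_orbit (p :: ('k::field^2^2) \<times> ('k^3))"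
  by (meson semi_orbit_sym semi_orbit_trans subsetI subset_antisym)

lemma disjoint_semi_orbits: "disjoint (range (semi_orbit :: ('k::field^2^2) \<times> ('k^3) \<Rightarrow> _))"
  unfolding disjoint_def by (metis disjoint_iff rangeE semi_orbit_eq)

lemma semi_orbits_of_cover:
  assumes "A = (\<Union>q\<in>R. semi_orbit q)"
  shows "{semi_orbit p | p. p \<in> A} = semi_orbit ` (R :: (('k::field^2^2) \<times> ('k^3)) set)"
  using assms semi_orbit_refl semi_orbit_eq by blast

subsection \<open>Invariants of the orbits\<close>

lemma conj_mult:
  fixes g X Y :: "'k::field^'n^'n"
  assumes "invertible g"
  shows "(g ** X ** matrix_inv g) ** (g ** Y ** matrix_inv g) = g ** (X ** Y) ** matrix_inv g"
proof -
  have "(g ** X ** matrix_inv g) ** (g ** Y ** matrix_inv g)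
      = g ** X ** (matrix_inv g ** g) ** Y ** matrix_inv g"
    by (simp add: matrix_mul_assoc)
  then show ?thesis
    using assms by (simp add: matrix_mul_inv matrix_mul_assoc)
qed

lemma conj_eq_0_iff:
  fixes g X :: "'k::field^'n^'n"
  assumes "invertible g"
  shows "g ** X ** matrix_inv g = 0 \<longleftrightarrow> X = 0"
proof
  assume "g ** X ** matrix_inv g = 0"
  moreover have "(matrix_inv g ** g) ** X ** (matrix_inv g ** g) = matrix_inv g ** (g ** X ** matrix_inv g) ** g"
    by (simp add: matrix_mul_assoc)
  ultimately have "(matrix_inv g ** g) ** X ** (matrix_inv g ** g) = 0"
    by simp
  then show "X = 0"
    using matrix_mul_inv(2)[OF assms] by simp
qed simp

lemma rho_in_range_drho_iff:
  assumes g: "invertible g"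
  shows "rho g w \<in> range (drho (g ** X ** matrix_inv g)) \<longleftrightarrow> w \<in> range (drho X)"
proof
  define Y where "Y = g ** X ** matrix_inv g"
  assume "rho g w \<in> range (drho Y)"
  then obtain u where u: "rho g w = drho Y u"
    by blast
  have "X ** matrix_inv g = matrix_inv g ** Y"
    using g by (simp add: Y_def matrix_mul_inv matrix_mul_assoc)
  then have "rho (matrix_inv g) (drho Y u) = drho X (rho (matrix_inv g) u)"
    by (rule rho_drho_intertwine)
  moreover have "rho (matrix_inv g) (rho g w) = w"
    using g by (simp add: rho_mult matrix_mul_inv rho_one)
  ultimately show "w \<in> range (drho X)"
    using u by (metis rangeI)
next
  assume "w \<in> range (drho X)"
  then obtain u where u: "w = drho X u"
    by blast
  have "(g ** X ** matrix_inv g) ** g = g ** X"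
    using g by (simp add: matrix_mul_inv flip: matrix_mul_assoc)
  then show "rho g w \<in> range (drho (g ** X ** matrix_inv g))"
    unfolding u by (metis rangeI rho_drho_intertwine)
qed

lemma diff_in_range_drho_iff:
  "w - drho X v \<in> range (drho X) \<longleftrightarrow> w \<in> range (drho (X :: 'k::field^2^2))"
proof
  assume "w - drho X v \<in> range (drho X)"
  then obtain u where "w - drho X v = drho X u"
    by blast
  then have "w = drho X u + drho X v"
    by (simp add: diff_eq_eq)
  then have "w = drho X (u + v)"
    by (simp add: drho_add)
  then show "w \<in> range (drho X)"
    by blast
next
  assume "w \<in> range (drho X)"
  then obtain u where "w = drho X u"
    by blast
  then have "w - drho X v = drho X (u - v)"
    by (simp add: drho_diff)
  then show "w - drho X v \<in> range (drho X)"
    by blast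
qed

definition orbit_label :: "('k::field^2^2) \<times> ('k^3) \<Rightarrow> bool \<times> bool \<times> bool" where
  "orbit_label p = (fst p = 0, snd p \<in> range (drho (fst p)), fst p = 0 \<and> discr (snd p) = 0)"

lemma orbit_label_Ad_semi:
  assumes g: "invertible g"
  shows "orbit_label (Ad_semi (g, v) p) = orbit_label p"
proof -
  obtain X w where p: "p = (X, w)"
    by (cases p)
  have range: "rho g w - drho (g ** X ** matrix_inv g) v \<in> range (drho (g ** X ** matrix_inv g))
      \<longleftrightarrow> w \<in> range (drho X)"
    using diff_in_range_drho_iff rho_in_range_drho_iff[OF g] by metis
  have "discr (rho g w) = 0 \<longleftrightarrow> discr w = 0"
    using g by (simp add: discr_rho invertible_det_nz)
  then show ?thesis
    using g by (auto simp: orbit_label_def p Ad_semi_apply conj_eq_0_iff range)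
qed

lemma orbit_label_eq:
  assumes "semi_orbit p = semi_orbit q"
  shows "orbit_label p = orbit_label (q :: ('k::field^2^2) \<times> ('k^3))"
proof -
  have "q \<in> semi_orbit p"
    using assms semi_orbit_refl by blast
  then show ?thesis
    by (metis orbit_label_Ad_semi semi_orbitE)
qed

lemma range_drho_0: "range (drho 0) = {0 :: 'k::field^3}"
  by auto

lemma range_drho_J2: "range (drho J2) = {w :: 'k::field_char_0^3. w$3 = 0}"
proof -
  have "w \<in> range (drho J2)" if "w$3 = 0" for w :: "'k^3"
  proof (rule range_eqI)
    show "w = drho J2 (vector [0, w$1, w$2 / 2])"
      using that by (simp add: drho_def J2_def Let_def vec_eq_iff forall_3)
  qed
  moreover have "drho J2 u $ 3 = 0" for u :: "'k^3"
    by (simp add: drho_def J2_def Let_def)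
  ultimately show ?thesis
    by auto
qed

subsection \<open>The nilpotent cone\<close>

lemma det_funpow_mult: "det (((**) X ^^ n) (mat 1)) = det X ^ n"
  by (induction n) (simp_all add: det_mul)

lemma funpow_mult_singular:
  assumes "det X = 0"
  shows "((**) X ^^ Suc n) (mat 1) = mat ((X$1$1 + X$2$2) ^ n) ** (X :: 'k::field^2^2)"
proof (induction n)
  case (Suc n)
  have cayley_hamilton: "X ** (mat c ** X) = mat ((X$1$1 + X$2$2) * c) ** X" for c
    using assms by (simp add: entrywise) algebra
  show ?case
    using Suc by (simp add: cayley_hamilton)
qed simp

lemma nilcone_eq: "nilcone = {X :: 'k::field^2^2. X ** X = 0}"
proof (intro set_eqI iffI; simp)
  fix X :: "'k^2^2"
  assume "X \<in> nilcone"
  then obtain n where n: "((**) X ^^ n) (mat 1) = 0"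
    unfolding nilcone_def by blast
  obtain m where m: "n = Suc m"
    using n by (cases n) (simp_all add: entrywise)
  have "det X ^ n = 0"
    using det_funpow_mult[where X = X and n = n] n by (metis det_0 mat_0)
  then have "det X = 0"
    by simp
  then have "mat ((X$1$1 + X$2$2) ^ m) ** X = 0"
    using n funpow_mult_singular[OF \<open>det X = 0\<close>, where n = m] by (simp only: m)
  then have "(X$1$1 + X$2$2) ^ m = 0 \<or> X = 0"
    by (auto simp: entrywise)
  then have "X$1$1 + X$2$2 = 0 \<or> X = 0"
    by (simp add: disj_imp)
  then show "X ** X = 0"
    using funpow_mult_singular[OF \<open>det X = 0\<close>, where n = 1] by auto
next
  fix X :: "'k^2^2"
  assume "X ** X = 0"
  then have "((**) X ^^ 2) (mat 1) = 0"
    by (simp add: numeral_2_eq_2)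
  then show "X \<in> nilcone"
    unfolding nilcone_def by blast
qed

lemma semi_orbit_subset_nilcone:
  assumes "X \<in> nilcone"
  shows "semi_orbit (X, w) \<subseteq> nilcone \<times> UNIV"
proof
  fix q
  assume "q \<in> semi_orbit (X, w)"
  then obtain g v where g: "invertible g" and q: "q = Ad_semi (g, v) (X, w)"
    by (rule semi_orbitE)
  show "q \<in> nilcone \<times> UNIV"
    using assms g by (simp add: q Ad_semi_apply nilcone_eq conj_mult)
qed

subsection \<open>Normal forms\<close>

lemma sqrt_exists: "\<exists>s. s\<^sup>2 = (x :: 'k::alg_closed_field)"
  using nth_root_exists[of 2 x] by simp

text \<open>\<open>rho g\<close> sends \<open>y\<^sup>2\<close> to \<open>(g\<^sub>1\<^sub>2 x + g\<^sub>2\<^sub>2 y)\<^sup>2\<close>, so the witness is a square root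
  of \<open>w\<close>.\<close>
lemma rho_orbit_degenerate:
  fixes w :: "'k::{alg_closed_field, field_char_0}^3"
  assumes "w \<noteq> 0" and "discr w = 0"
  shows "\<exists>g. invertible g \<and> rho g (vector [0, 0, 1]) = w"
proof (cases "w$1 = 0")
  case True
  then have "w$2 = 0" and "w$3 \<noteq> 0"
    using assms by (auto simp: discr_def vec_eq_iff forall_3)
  obtain s where s: "s\<^sup>2 = w$3"
    using sqrt_exists by blast
  let ?g = "vector [vector [1, 0], vector [0, s]] :: 'k^2^2"
  have "invertible ?g" and "rho ?g (vector [0, 0, 1]) = w"
    using True \<open>w$2 = 0\<close> \<open>w$3 \<noteq> 0\<close> s
    by (auto simp: invertible_det_nz det_2 rho_def Let_def vec_eq_iff forall_3)
  then show ?thesis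
    by blast
next
  case False
  obtain s where s: "s\<^sup>2 = w$1"
    using sqrt_exists by blast
  with False have "s \<noteq> 0"
    by auto
  let ?g = "vector [vector [0, s], vector [1, w$2 / (2 * s)]] :: 'k^2^2"
  have "invertible ?g" and "rho ?g (vector [0, 0, 1]) = w"
    using \<open>s \<noteq> 0\<close> s assms(2) False
    by (auto simp: invertible_det_nz det_2 rho_def Let_def vec_eq_iff forall_3 discr_def
        field_simps power2_eq_square)
  then show ?thesis
    by blast
qed

text \<open>\<open>rho g\<close> sends \<open>xy\<close> to \<open>(g\<^sub>1\<^sub>1 x + g\<^sub>2\<^sub>1 y) (g\<^sub>1\<^sub>2 x + g\<^sub>2\<^sub>2 y)\<close>, so the witness is a
  factorisation of \<open>w\<close> by the quadratic formula.\<close>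
lemma rho_orbit_nondegenerate:
  fixes w :: "'k::{alg_closed_field, field_char_0}^3"
  assumes "discr w \<noteq> 0"
  shows "\<exists>g. invertible g \<and> rho g (vector [0, 1, 0]) = w"
proof (cases "w$1 = 0")
  case True
  then have "w$2 \<noteq> 0"
    using assms by (simp add: discr_def)
  let ?g = "vector [vector [0, w$2], vector [1, w$3]] :: 'k^2^2"
  have "invertible ?g" and "rho ?g (vector [0, 1, 0]) = w"
    using True \<open>w$2 \<noteq> 0\<close>
    by (auto simp: invertible_det_nz det_2 rho_def Let_def vec_eq_iff forall_3)
  then show ?thesis
    by blast
next
  case False
  obtain s where s: "s\<^sup>2 = discr w"
    using sqrt_exists by blast
  with assms have "s \<noteq> 0"
    by auto
  let ?g = "vector [vector [w$1, 1], vector [(w$2 - s) / 2, (w$2 + s) / (2 * w$1)]] :: 'k^2^2"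
  have "det ?g = s"
    using False by (simp add: det_2 field_simps)
  then have "invertible ?g"
    using \<open>s \<noteq> 0\<close> by (simp add: invertible_det_nz)
  moreover have "rho ?g (vector [0, 1, 0]) = w"
    using False s unfolding discr_def
    by (simp add: rho_def Let_def vec_eq_iff forall_3 field_simps power2_eq_square) algebra
  ultimately show ?thesis
    by blast
qed

lemma nilpotent_conj_J2:
  fixes X :: "'k::field^2^2"
  assumes "X ** X = 0" and "X \<noteq> 0"
  shows "\<exists>g. invertible g \<and> g ** J2 = X ** g"
proof -
  have sq: "X$1$1 * X$1$1 + X$1$2 * X$2$1 = 0" "X$1$1 * X$1$2 + X$1$2 * X$2$2 = 0"
      "X$2$1 * X$1$1 + X$2$2 * X$2$1 = 0" "X$2$1 * X$1$2 + X$2$2 * X$2$2 = 0"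
    using assms(1) by (simp_all add: entrywise)
  show ?thesis
  proof (cases "X$2$1 = 0")
    case True
    then have "X$1$1 = 0" "X$2$2 = 0"
      using sq by auto
    with True assms(2) have "X$1$2 \<noteq> 0"
      by (auto simp: vec_eq_iff forall_2)
    let ?g = "vector [vector [X$1$2, 0], vector [0, 1]] :: 'k^2^2"
    have "invertible ?g" and "?g ** J2 = X ** ?g"
      using True \<open>X$1$1 = 0\<close> \<open>X$2$2 = 0\<close> \<open>X$1$2 \<noteq> 0\<close>
      by (simp_all add: invertible_det_nz det_2 entrywise J2_def)
    then show ?thesis
      by blast
  next
    case False
    let ?g = "vector [vector [X$1$1, 1], vector [X$2$1, 0]] :: 'k^2^2"
    have "invertible ?g" and "?g ** J2 = X ** ?g"
      using False sq by (simp_all add: invertible_det_nz det_2 entrywise J2_def algebra_simps)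
    then show ?thesis
      by blast
  qed
qed

subsection \<open>Orbit representatives\<close>

lemma semi_orbit_zero_rho: "invertible g \<Longrightarrow> (0, rho g w) \<in> semi_orbit (0, w :: 'k::field^3)"
  using semi_orbitI[of g 0 "(0, w)"] by (simp add: Ad_semi_zero)

lemma semi_orbit_zero_rho_rho:
  assumes "invertible g" and "invertible h"
  shows "(0, rho g w) \<in> semi_orbit (0, rho h (w :: 'k::field^3))"
  using semi_orbit_eq[OF semi_orbit_zero_rho[OF assms(2)]] semi_orbit_zero_rho[OF assms(1)] by simp

lemma semi_orbit_J2:
  fixes X :: "'k::field^2^2"
  assumes "X ** X = 0" and "X \<noteq> 0"
  obtains u where "(X, w) \<in> semi_orbit (J2, u)"
proof -
  obtain g where g: "invertible g" and gJ2: "g ** J2 = X ** g"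
    using nilpotent_conj_J2[OF assms] by blast
  have "g ** J2 ** matrix_inv g = X"
    using g by (simp add: gJ2 matrix_mul_inv flip: matrix_mul_assoc)
  then have "Ad_semi (g, 0) (J2, rho (matrix_inv g) w) = (X, w)"
    using g by (simp add: Ad_semi_apply rho_mult matrix_mul_inv rho_one)
  then show ?thesis
    using semi_orbitI[OF g] that by metis
qed

lemma Ad_semi_mat_J2:
  assumes "s \<noteq> 0"
  shows "Ad_semi (mat s, v) (J2, w) = (J2, s\<^sup>2 *s w - drho J2 (v :: 'k::field^3))"
proof -
  have "mat s ** J2 ** mat (inverse s) = (J2 :: 'k^2^2)"
    using assms by (simp add: entrywise J2_def)
  then show ?thesis
    using assms by (simp add: Ad_semi_apply matrix_inv_mat rho_mat)
qed

lemma J2_semi_orbit_cases: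
  fixes u w :: "'k::{alg_closed_field, field_char_0}^3"
  assumes "u$3 \<noteq> 0"
  shows "(J2, w) \<in> semi_orbit (J2, 0) \<union> semi_orbit (J2, u)"
proof -
  obtain s x where "s \<noteq> 0" and x: "x \<in> {0, u}" and "s\<^sup>2 * x$3 = w$3"
  proof (cases "w$3 = 0")
    case True
    then show ?thesis
      using that[of 1 0] by simp
  next
    case False
    obtain s where s: "s\<^sup>2 = w$3 / u$3"
      using sqrt_exists by blast
    with assms False have "s \<noteq> 0"
      by auto
    then show ?thesis
      using that[of s u] s assms by simp
  qed
  then have "s\<^sup>2 *s x - w \<in> range (drho J2)"
    by (simp add: range_drho_J2)
  then obtain v where "drho J2 v = s\<^sup>2 *s x - w"
    by (metis rangeE)
  then have "Ad_semi (mat s, v) (J2, x) = (J2, w)"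
    using \<open>s \<noteq> 0\<close> by (simp add: Ad_semi_mat_J2)
  then show ?thesis
    using semi_orbitI[of "mat s" v "(J2, x)"] \<open>s \<noteq> 0\<close> x
    by (auto simp: invertible_det_nz det_2 mat_def)
qed

lemma nilpotent_semi_orbit_cases:
  fixes v v' u :: "'k::{alg_closed_field, field_char_0}^3"
  assumes "v \<noteq> 0" and "discr v = 0" and "discr v' \<noteq> 0" and "u$3 \<noteq> 0" and "X ** X = 0"
  shows "(X, w) \<in> semi_orbit (0, 0) \<union> semi_orbit (0, v) \<union> semi_orbit (0, v')
    \<union> semi_orbit (J2, 0) \<union> semi_orbit (J2, u)"
proof (cases "X = 0")
  case True
  consider "w = 0" | "w \<noteq> 0" "discr w = 0" | "discr w \<noteq> 0"
    by blast
  then show ?thesis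
  proof cases
    case 1
    then show ?thesis
      using True semi_orbit_refl by blast
  next
    case 2
    then show ?thesis
      using True rho_orbit_degenerate[OF assms(1,2)] rho_orbit_degenerate[of w]
        semi_orbit_zero_rho_rho by blast
  next
    case 3
    then show ?thesis
      using True rho_orbit_nondegenerate[OF assms(3)] rho_orbit_nondegenerate[of w]
        semi_orbit_zero_rho_rho by blast
  qed
next
  case False
  obtain u' where "(X, w) \<in> semi_orbit (J2, u')"
    using semi_orbit_J2[OF assms(5) False] .
  moreover have "(J2, u') \<in> semi_orbit (J2, 0) \<union> semi_orbit (J2, u)"
    using J2_semi_orbit_cases[OF assms(4)] .
  ultimately show ?thesis
    using semi_orbit_trans semi_orbit_sym by blast
qed

lemma nilcone_semi_orbit_cover:
  fixes v v' u :: "'k::{alg_closed_field, field_char_0}^3"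
  assumes "v \<noteq> 0" and "discr v = 0" and "discr v' \<noteq> 0" and "u$3 \<noteq> 0"
  shows "nilcone \<times> UNIV = semi_orbit (0, 0) \<union> semi_orbit (0, v) \<union> semi_orbit (0, v')
    \<union> semi_orbit (J2, 0) \<union> semi_orbit (J2, u)"
proof
  show "nilcone \<times> UNIV \<subseteq> semi_orbit (0, 0) \<union> semi_orbit (0, v) \<union> semi_orbit (0, v')
      \<union> semi_orbit (J2, 0) \<union> semi_orbit (J2, u)"
    using nilpotent_semi_orbit_cases[OF assms] by (auto simp: nilcone_eq)
  have "J2 \<in> nilcone" and "0 \<in> nilcone"
    by (simp_all add: nilcone_eq J2_def entrywise)
  then show "semi_orbit (0, 0) \<union> semi_orbit (0, v) \<union> semi_orbit (0, v')
      \<union> semi_orbit (J2, 0) \<union> semi_orbit (J2, u) \<subseteq> nilcone \<times> UNIV"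
    by (intro Un_least semi_orbit_subset_nilcone)
qed

lemma semi_orbits_distinct:
  fixes v v' u :: "'k::field_char_0^3"
  assumes "v \<noteq> 0" and "discr v = 0" and "discr v' \<noteq> 0" and "u$3 \<noteq> 0"
  shows "distinct [semi_orbit (0, 0), semi_orbit (0, v), semi_orbit (0, v'),
    semi_orbit (J2, 0), semi_orbit (J2, u)]"
proof -
  have label_neq: "semi_orbit p \<noteq> semi_orbit q"
    if "orbit_label p \<noteq> orbit_label (q :: ('k^2^2) \<times> ('k^3))" for p q
    using that orbit_label_eq by blast
  have "v' \<noteq> 0"
    using assms(3) by (auto simp: discr_def)
  moreover have "(J2 :: 'k^2^2) \<noteq> 0"
    by (simp add: J2_def vec_eq_iff)
  ultimately have
    "orbit_label (0, 0 :: 'k^3) = (True, True, True)"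
    "orbit_label (0, v) = (True, False, True)"
    "orbit_label (0, v') = (True, False, False)"
    "orbit_label (J2, 0 :: 'k^3) = (False, True, False)"
    "orbit_label (J2, u) = (False, False, False)"
    using assms by (simp_all add: orbit_label_def range_drho_0 range_drho_J2 discr_def)
  then show ?thesis
    by (simp add: label_neq)
qed

lemma lowest_weight_vectorD:
  fixes v :: "'k::field_char_0^3"
  assumes "lowest_weight_vector v"
  obtains c where "c \<noteq> 0" and "v = vector [0, 0, c]"
proof -
  have "v \<noteq> 0" and "drho E21 v = 0"
    using assms unfolding lowest_weight_vector_def by auto
  then show ?thesis
    using that[of "v$3"] by (auto simp: drho_def E21_def Let_def vec_eq_iff forall_3)
qed

theorem lemma2p1:
  fixes v0 :: "'k::{alg_closed_field, field_char_0} ^ 3"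
  assumes "lowest_weight_vector v0"
  defines "v1 \<equiv> drho J2 v0"
  defines "v2 \<equiv> drho J2 v1"
  defines "O1 \<equiv> semi_orbit (0, 0)"
      and "O2 \<equiv> semi_orbit (0, v0)"
      and "O3 \<equiv> semi_orbit (0, v0 + v2)"
      and "O4 \<equiv> semi_orbit (J2, 0)"
      and "O5 \<equiv> semi_orbit (J2, v0)"
  shows "nilcone \<times> UNIV = O1 \<union> O2 \<union> O3 \<union> O4 \<union> O5 \<and>
         {semi_orbit p | p. p \<in> nilcone \<times> UNIV} = {O1, O2, O3, O4, O5} \<and>
         card {O1, O2, O3, O4, O5} = 5 \<and>
         disjoint {O1, O2, O3, O4, O5}"
proof -
  obtain c where c: "c \<noteq> 0" and v0: "v0 = vector [0, 0, c]"
    using assms(1) by (rule lowest_weight_vectorD)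
  have "v0 + v2 = vector [2 * c, 0, c]"
    by (simp add: v2_def v1_def v0 drho_def J2_def Let_def vec_eq_iff forall_3)
  then have reps: "v0 \<noteq> 0" "discr v0 = 0" "discr (v0 + v2) \<noteq> 0" "v0$3 \<noteq> 0"
    using c by (simp_all add: v0 discr_def vec_eq_iff forall_3)
  note O_defs = O1_def O2_def O3_def O4_def O5_def
  have cover: "nilcone \<times> UNIV = O1 \<union> O2 \<union> O3 \<union> O4 \<union> O5"
    unfolding O_defs by (rule nilcone_semi_orbit_cover[OF reps])
  then have "nilcone \<times> UNIV
      = (\<Union>q\<in>{(0, 0), (0, v0), (0, v0 + v2), (J2, 0), (J2, v0)}. semi_orbit q)"
    unfolding O_defs by (simp add: Un_assoc)
  from semi_orbits_of_cover[OF this]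
  have "{semi_orbit p | p. p \<in> nilcone \<times> UNIV} = {O1, O2, O3, O4, O5}"
    unfolding O_defs by simp
  moreover have "card {O1, O2, O3, O4, O5} = 5"
    using distinct_card[OF semi_orbits_distinct[OF reps]] unfolding O_defs by simp
  moreover have "disjoint {O1, O2, O3, O4, O5}"
    by (rule pairwise_subset[OF disjoint_semi_orbits]) (simp add: O_defs)
  ultimately show ?thesis
    using cover by blast
qed

end
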